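(* For a prime $p$ and integers $k$ and $h\ge1$, let $U(p;k,h)$ denote the number of $u\in\{0,\ldots,p-1\}$ such that $q_p(u)\equiv z\pmod p$ for some integer $z\in[k+1,k+h]$. Then for any integers $k$ and $h\ge 1$ we have $U(p;k,h)\le h^{1/2}p^{1/2+o(1)}$ as $p\to\infty$.
   Context: For a prime $p$ and an integer $u$ with $\gcd(u,p)=1$, the Fermat quotient $q_p(u)$ is the unique integer with $q_p(u)\equiv (u^{p-1}-1)/p \pmod p$ and $0\le q_p(u)\le p-1$; also $q_p(kp)=0$ for all $k\in\mathbb{Z}$. *)

theory Defs
  imports Complex_Main "HOL-Number_Theory.Number_Theory"
begin

text \<open>Fermat quotient q_p(u): for p not dividing u, the residue in [0,p-1] of
  (u^(p-1) - 1)/p (an integer by Fermat's little theorem); q_p(kp) = 0.\<close>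
definition fermat_quotient :: "nat \<Rightarrow> int \<Rightarrow> int" where
  "fermat_quotient p u =
     (if int p dvd u then 0 else ((u ^ (p - 1) - 1) div int p) mod int p)"

definition U_count :: "nat \<Rightarrow> int \<Rightarrow> int \<Rightarrow> nat" where
  "U_count p k h = card {u \<in> {0..<int p}.
      \<exists>z. k + 1 \<le> z \<and> z \<le> k + h \<and> [fermat_quotient p u = z] (mod int p)}"

end

theory Submission
  imports Defs "HOL-Real_Asymp.Real_Asymp"
begin

text \<open>If \<open>u, v \<in> [1, p)\<close> both have Fermat quotient in \<open>[k + 1, k + h]\<close> mod \<open>p\<close>, then \<open>w = u * v < p\<^sup>2\<close>
  satisfies \<open>w ^ (p - 1) \<equiv> 1 + p * z (mod p\<^sup>2)\<close> for some \<open>z \<in> [2k + 2, 2k + 2h]\<close>. For fixed \<open>z\<close> this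
  congruence has at most \<open>p\<close> solutions in \<open>[0, p\<^sup>2)\<close>, as a solution is determined by its residue mod
  \<open>p\<close> (Hensel), and each \<open>w\<close> arises from at most \<open>\<tau>(w) = p\<^bsup>o(1)\<^esup>\<close> pairs. Hence
  \<open>U(p; k, h)\<^sup>2 \<le> (2h - 1) p\<^bsup>1 + o(1)\<^esup>\<close>.\<close>

lemma card_divisors_prime_power_mult_le:
  fixes q m :: nat
  assumes "prime q" and "m > 0"
  shows "card {d. d dvd q ^ a * m} \<le> (a + 1) * card {d. d dvd m}"
proof -
  have "{d. d dvd q ^ a * m} \<subseteq> (\<lambda>(j, e). q ^ j * e) ` ({0..a} \<times> {d. d dvd m})"
  proof
    fix d assume "d \<in> {d. d dvd q ^ a * m}"
    then obtain b c where bc: "d = b * c" "b dvd q ^ a" "c dvd m"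
      using division_decomp by blast
    then obtain i where "i \<le> a" "b = q ^ i"
      using divides_primepow_nat[OF \<open>prime q\<close>] by blast
    with bc show "d \<in> (\<lambda>(j, e). q ^ j * e) ` ({0..a} \<times> {d. d dvd m})"
      by (auto intro!: image_eqI[of _ _ "(i, c)"])
  qed
  then have "card {d. d dvd q ^ a * m} \<le> card ((\<lambda>(j, e). q ^ j * e) ` ({0..a} \<times> {d. d dvd m}))"
    by (intro card_mono) (auto simp: \<open>m > 0\<close>)
  also have "\<dots> \<le> card ({0..a} \<times> {d. d dvd m})"
    by (rule card_image_le) (auto simp: \<open>m > 0\<close>)
  finally show ?thesis
    by (simp add: card_cartesian_product)
qed

text \<open>Each prime power \<open>q ^ a\<close> exactly dividing \<open>n\<close> contributes a factor \<open>a + 1\<close> to the number of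
  divisors; it is paid for by \<open>q powr (a * \<delta>)\<close> and, for the finitely many primes below \<open>K\<close>, an
  extra factor \<open>M\<close>.\<close>

lemma card_divisors_le_powr_of_prime_power_bound:
  fixes \<delta> M :: real and K n :: nat
  assumes "M \<ge> 1" and "n > 0"
    and local_bound: "\<And>q a. prime q \<Longrightarrow> real a + 1 \<le> (if q < K then M else 1) * real q powr (real a * \<delta>)"
  shows "real (card {d. d dvd n}) \<le> M ^ card (prime_factors n \<inter> {..<K}) * real n powr \<delta>"
  using \<open>n > 0\<close>
proof (induction n rule: less_induct)
  case (less n)
  show ?case
  proof (cases "n = 1")
    case False
    then obtain q where q: "prime q" "q dvd n"
      using prime_factor_nat by blast
    define a where "a = multiplicity q n"
    obtain m where nm: "n = q ^ a * m" "\<not> q dvd m"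
      using multiplicity_decompose'[of n q] less.prems q not_prime_unit unfolding a_def by blast
    have "a \<ge> 1"
      using q less.prems by (simp add: a_def prime_multiplicity_gt_zero_iff Suc_le_eq)
    have "m > 0"
      using nm less.prems by (metis gr0I mult_0_right)
    have "1 < q ^ a"
      using prime_gt_1_nat[OF q(1)] \<open>a \<ge> 1\<close> by (intro one_less_power) auto
    then have "m < n"
      using nm \<open>m > 0\<close> by simp
    define c where "c X = card (X \<inter> {..<K})" for X
    have factors_n: "prime_factors n = insert q (prime_factors m)"
      using nm \<open>m > 0\<close> q \<open>a \<ge> 1\<close> by (simp add: prime_factors_product prime_factorization_prime_power)
    have M_pow: "(if q < K then M else 1) * M ^ c (prime_factors m) \<le> M ^ c (prime_factors n)"
    proof -
      have "q \<notin> prime_factors m"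
        using nm by (simp add: in_prime_factors_iff)
      then have "c (prime_factors n) = (if q < K then Suc (c (prime_factors m)) else c (prime_factors m))"
        unfolding c_def factors_n by (simp add: Int_insert_left)
      then show ?thesis by simp
    qed
    have "real (card {d. d dvd n}) \<le> real ((a + 1) * card {d. d dvd m})"
      using card_divisors_prime_power_mult_le[OF q(1) \<open>m > 0\<close>, of a] unfolding nm(1) of_nat_le_iff .
    also have "\<dots> = (real a + 1) * real (card {d. d dvd m})"
      by (simp add: algebra_simps)
    also have "\<dots> \<le> ((if q < K then M else 1) * real q powr (real a * \<delta>))
                     * (M ^ c (prime_factors m) * real m powr \<delta>)"
      using local_bound[OF q(1), of a] less.IH[OF \<open>m < n\<close> \<open>m > 0\<close>] unfolding c_def
      by (intro mult_mono) auto
    also have "\<dots> = ((if q < K then M else 1) * M ^ c (prime_factors m)) * real n powr \<delta>"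
      using nm(1) prime_gt_0_nat[OF q(1)]
      by (simp add: powr_mult powr_realpow[symmetric] powr_powr mult.commute mult.left_commute)
    also have "\<dots> \<le> M ^ c (prime_factors n) * real n powr \<delta>"
      by (rule mult_right_mono[OF M_pow]) simp
    finally show ?thesis
      unfolding c_def .
  qed simp
qed

lemma prime_power_divisor_factor_bound:
  fixes \<delta> :: real
  assumes "\<delta> > 0"
  obtains M :: real and K :: nat where "M \<ge> 1"
    and "\<And>q a. prime q \<Longrightarrow> real a + 1 \<le> (if q < K then M else 1) * real q powr (real a * \<delta>)"
proof
  define M where "M = 1 + 1 / (\<delta> * ln 2)"
  define K where "K = nat \<lceil>2 powr (1 / \<delta>)\<rceil>"
  show "M \<ge> 1"
    using assms by (simp add: M_def)
  show "real a + 1 \<le> (if q < K then M else 1) * real q powr (real a * \<delta>)"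
    if "prime q" for q a :: nat
  proof (cases "q < K")
    case True
    have "real a + 1 \<le> M * (1 + real a * (\<delta> * ln 2))"
      using assms by (simp add: M_def field_simps)
    also have "\<dots> \<le> M * exp (real a * (\<delta> * ln 2))"
      using \<open>M \<ge> 1\<close> by (intro mult_left_mono exp_ge_add_one_self) auto
    also have "\<dots> = M * 2 powr (real a * \<delta>)"
      by (simp add: powr_def)
    also have "\<dots> \<le> M * real q powr (real a * \<delta>)"
      using prime_ge_2_nat[OF that] assms \<open>M \<ge> 1\<close> by (intro mult_left_mono powr_mono2) auto
    finally show ?thesis
      using True by simp
  next
    case False
    then have "2 powr (1 / \<delta>) \<le> real q"
      unfolding K_def by linarith
    then have "(2 powr (1 / \<delta>)) powr \<delta> \<le> real q powr \<delta>"
      using assms by (intro powr_mono2) auto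
    then have q_delta: "2 \<le> real q powr \<delta>"
      using assms by (simp add: powr_powr)
    have "real a + 1 \<le> 2 ^ a"
      by (induction a) auto
    also have "\<dots> \<le> (real q powr \<delta>) ^ a"
      using q_delta by (intro power_mono) auto
    also have "\<dots> = real q powr (real a * \<delta>)"
      using prime_gt_0_nat[OF that] by (simp add: powr_power)
    finally show ?thesis
      using False by simp
  qed
qed

lemma card_divisors_le_powr:
  fixes \<delta> :: real
  assumes "\<delta> > 0"
  shows "\<exists>C. \<forall>n::nat. n > 0 \<longrightarrow> real (card {d. d dvd n}) \<le> C * real n powr \<delta>"
proof -
  obtain M :: real and K :: nat where "M \<ge> 1"
    and local_bound: "\<And>q a. prime q \<Longrightarrow> real a + 1 \<le> (if q < K then M else 1) * real q powr (real a * \<delta>)"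
    using prime_power_divisor_factor_bound[OF assms] by blast
  have "real (card {d. d dvd n}) \<le> M ^ K * real n powr \<delta>" if "n > 0" for n :: nat
  proof -
    have "card (prime_factors n \<inter> {..<K}) \<le> K"
      using card_mono[of "{..<K}" "prime_factors n \<inter> {..<K}"] by auto
    then have "M ^ card (prime_factors n \<inter> {..<K}) \<le> M ^ K"
      using \<open>M \<ge> 1\<close> by (rule power_increasing)
    then show ?thesis
      using card_divisors_le_powr_of_prime_power_bound[OF \<open>M \<ge> 1\<close> that local_bound]
      by (smt (verit) mult_right_mono powr_ge_zero)
  qed
  then show ?thesis
    by blast
qed

lemma fermat_theorem_int:
  assumes "prime p" and "\<not> int p dvd u"
  shows "[u ^ (p - 1) = 1] (mod int p)"
proof -
  have u_mod: "[u = int (nat (u mod int p))] (mod int p)"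
    using prime_gt_0_nat[OF \<open>prime p\<close>] by (simp add: Cong.cong_def)
  then have "\<not> p dvd nat (u mod int p)"
    using assms(2) by (metis cong_dvd_iff int_dvd_int_iff)
  then have "[nat (u mod int p) ^ (p - 1) = 1] (mod p)"
    using fermat_theorem[OF \<open>prime p\<close>] by blast
  then have "[int (nat (u mod int p)) ^ (p - 1) = 1] (mod int p)"
    by (metis cong_int_iff of_nat_1 of_nat_power)
  with cong_pow[OF u_mod] show ?thesis
    by (rule cong_trans)
qed

lemma fermat_quotient_cong:
  assumes "prime p" and "\<not> int p dvd u"
  shows "[u ^ (p - 1) = 1 + int p * fermat_quotient p u] (mod (int p)\<^sup>2)"
proof -
  obtain t where t: "u ^ (p - 1) - 1 = int p * t"
    using fermat_theorem_int[OF assms] by (auto simp: cong_iff_dvd_diff dvd_def)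
  have "(u ^ (p - 1) - 1) div int p = t"
    using prime_gt_0_nat[OF \<open>prime p\<close>] unfolding t by simp
  then have "fermat_quotient p u = t mod int p"
    using assms(2) by (simp add: fermat_quotient_def)
  then have "int p * fermat_quotient p u = (int p * t) mod (int p * int p)"
    by (simp only: mult_mod_right)
  then have "[u ^ (p - 1) - 1 = int p * fermat_quotient p u] (mod (int p)\<^sup>2)"
    unfolding t power2_eq_square by (metis cong_mod_right cong_refl)
  then have "[1 + (u ^ (p - 1) - 1) = 1 + int p * fermat_quotient p u] (mod (int p)\<^sup>2)"
    by (simp only: cong_add_lcancel)
  then show ?thesis
    by simp
qed

lemma cong_mult_modulus_square:
  fixes a b m :: int
  assumes "[a = b] (mod m)"
  shows "[m * a = m * b] (mod m\<^sup>2)"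
proof -
  obtain s where "a - b = m * s"
    using assms by (auto simp: cong_iff_dvd_diff dvd_def)
  then have "m * a - m * b = m\<^sup>2 * s"
    by (metis right_diff_distrib power2_eq_square mult.assoc)
  then show ?thesis
    unfolding cong_iff_dvd_diff dvd_def by blast
qed

lemma fermat_quotient_cong_imp_power_cong:
  assumes "prime p" and "\<not> int p dvd u" and "[fermat_quotient p u = z] (mod int p)"
  shows "[u ^ (p - 1) = 1 + int p * z] (mod (int p)\<^sup>2)"
proof -
  have "[1 + int p * fermat_quotient p u = 1 + int p * z] (mod (int p)\<^sup>2)"
    using cong_mult_modulus_square[OF assms(3)] by (simp only: cong_add_lcancel)
  with fermat_quotient_cong[OF assms(1,2)] show ?thesis
    by (rule cong_trans)
qed

lemma power_add_mult_cong_first_order: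
  fixes x m t :: int
  shows "[(x + m * t) ^ Suc n = x ^ Suc n + int (Suc n) * x ^ n * m * t] (mod m\<^sup>2)"
proof (induction n)
  case (Suc n)
  let ?y = "x ^ Suc n + int (Suc n) * x ^ n * m * t"
  have "[(x + m * t) ^ Suc (Suc n) = ?y * (x + m * t)] (mod m\<^sup>2)"
    using cong_mult[OF Suc.IH cong_refl[of "x + m * t"]] by (simp add: mult.commute)
  also have "?y * (x + m * t) = x ^ Suc (Suc n) + int (Suc (Suc n)) * x ^ Suc n * m * t
      + m\<^sup>2 * (int (Suc n) * x ^ n * t * t)"
    by (simp add: algebra_simps power2_eq_square)
  also have "[\<dots> = x ^ Suc (Suc n) + int (Suc (Suc n)) * x ^ Suc n * m * t] (mod m\<^sup>2)"
    by (simp add: cong_iff_dvd_diff)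
  finally show ?case .
qed simp

text \<open>Hensel uniqueness: since \<open>P\<close> divides neither \<open>n\<close> nor a solution \<open>v\<close>, the derivative
  \<open>n * v ^ (n - 1)\<close> is a unit mod \<open>P\<close>, so a solution mod \<open>P\<^sup>2\<close> is determined by its residue mod \<open>P\<close>.\<close>

lemma power_cong_prime_square_unique:
  fixes P w v c :: int
  assumes "prime P" and "\<not> P dvd int n" and "\<not> P dvd c"
    and w: "[w ^ n = c] (mod P\<^sup>2)" and v: "[v ^ n = c] (mod P\<^sup>2)" and "[w = v] (mod P)"
  shows "[w = v] (mod P\<^sup>2)"
proof -
  obtain m where n: "n = Suc m"
    using assms(2) by (cases n) auto
  have "\<not> P dvd v"
  proof
    assume "P dvd v"
    then have "P dvd v ^ n"
      by (simp add: n)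
    moreover have "[v ^ n = c] (mod P)"
      using v cong_dvd_modulus[of "v ^ n" c "P\<^sup>2" P] by simp
    ultimately show False
      using assms(3) cong_dvd_iff by metis
  qed
  have "P dvd w - v"
    using \<open>[w = v] (mod P)\<close> by (simp add: cong_iff_dvd_diff)
  then obtain t where t: "w = v + P * t"
    by (auto simp: dvd_def algebra_simps)
  have "[v ^ n + int n * v ^ m * P * t = w ^ n] (mod P\<^sup>2)"
    using power_add_mult_cong_first_order[of v P t m] unfolding t n by (rule cong_sym)
  also have "[w ^ n = v ^ n] (mod P\<^sup>2)"
    using cong_trans[OF w cong_sym[OF v]] .
  finally have "[v ^ n + P * (int n * v ^ m * t) = v ^ n + P * 0] (mod P\<^sup>2)"
    by (simp add: ac_simps)
  then have "[P * (int n * v ^ m * t) = P * 0] (mod P * P)"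
    by (simp only: cong_add_lcancel power2_eq_square)
  then have "P dvd int n * v ^ m * t"
    using \<open>prime P\<close> by (simp add: cong_0_iff)
  moreover have "\<not> P dvd v ^ m"
    using \<open>\<not> P dvd v\<close> \<open>prime P\<close> prime_dvd_power by blast
  ultimately have "P dvd t"
    using \<open>prime P\<close> assms(2) by (simp add: prime_dvd_mult_iff)
  then show ?thesis
    unfolding t cong_iff_dvd_diff power2_eq_square by simp
qed

lemma card_power_cong_prime_square_le:
  assumes "prime p" and "\<not> p dvd n" and "\<not> int p dvd c"
  shows "card {w \<in> {0..<(int p)\<^sup>2}. [w ^ n = c] (mod (int p)\<^sup>2)} \<le> p"
proof -
  define W where "W = {w \<in> {0..<(int p)\<^sup>2}. [w ^ n = c] (mod (int p)\<^sup>2)}"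
  have "inj_on (\<lambda>w. w mod int p) W"
  proof
    fix w v assume w: "w \<in> W" and v: "v \<in> W" and "w mod int p = v mod int p"
    then have "[w = v] (mod int p)"
      unfolding Cong.cong_def by blast
    moreover have "[w ^ n = c] (mod (int p)\<^sup>2)" "[v ^ n = c] (mod (int p)\<^sup>2)"
      using w v by (simp_all add: W_def)
    ultimately have "[w = v] (mod (int p)\<^sup>2)"
      using power_cong_prime_square_unique[of "int p" n c w v] assms by simp
    then show "w = v"
      using w v unfolding W_def by (auto intro: cong_less_imp_eq_int)
  qed
  then have "card W \<le> card {0..<int p}"
    using prime_gt_0_nat[OF assms(1)] by (intro card_inj_on_le) auto
  then show ?thesis
    by (simp add: W_def)
qed

lemma card_le_card_image_mult:
  assumes "finite A" and "\<And>y. y \<in> f ` A \<Longrightarrow> real (card {x \<in> A. f x = y}) \<le> D"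
  shows "real (card A) \<le> real (card (f ` A)) * D"
proof -
  have "card A = card (\<Union>y\<in>f ` A. {x \<in> A. f x = y})"
    by (rule arg_cong[where f = card]) auto
  also have "\<dots> \<le> (\<Sum>y\<in>f ` A. card {x \<in> A. f x = y})"
    by (rule card_UN_le) (simp add: assms(1))
  finally have "real (card A) \<le> (\<Sum>y\<in>f ` A. real (card {x \<in> A. f x = y}))"
    by (metis of_nat_mono of_nat_sum)
  also have "\<dots> \<le> (\<Sum>y\<in>f ` A. D)"
    by (rule sum_mono) (rule assms(2))
  also have "\<dots> = real (card (f ` A)) * D"
    by simp
  finally show ?thesis .
qed

lemma card_factor_pairs_le_card_divisors:
  fixes A :: "(int \<times> int) set" and w :: int
  assumes "A \<subseteq> {0<..} \<times> {0<..}" and "w > 0"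
  shows "card {x \<in> A. fst x * snd x = w} \<le> card {d. d dvd nat w}"
proof (rule card_inj_on_le)
  show "inj_on (\<lambda>x. nat (fst x)) {x \<in> A. fst x * snd x = w}"
  proof (rule inj_onI)
    fix x y assume x: "x \<in> {x \<in> A. fst x * snd x = w}" and y: "y \<in> {x \<in> A. fst x * snd x = w}"
      and "nat (fst x) = nat (fst y)"
    moreover have "fst x > 0" "fst y > 0"
      using x y assms(1) by auto
    ultimately have "fst x = fst y"
      by simp
    moreover from this have "snd x = snd y"
      using x y \<open>fst x > 0\<close> by auto
    ultimately show "x = y"
      by (simp add: prod_eq_iff)
  qed
  show "(\<lambda>x. nat (fst x)) ` {x \<in> A. fst x * snd x = w} \<subseteq> {d. d dvd nat w}"
    using assms(1) by (auto simp: nat_mult_distrib)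
  show "finite {d. d dvd nat w}"
    using assms(2) by simp
qed

definition U_units :: "nat \<Rightarrow> int \<Rightarrow> int \<Rightarrow> int set" where
  "U_units p k h =
     {u \<in> {1..<int p}. \<exists>z. k + 1 \<le> z \<and> z \<le> k + h \<and> [fermat_quotient p u = z] (mod int p)}"

lemma finite_U_units: "finite (U_units p k h)"
  by (rule finite_subset[of _ "{1..<int p}"]) (auto simp: U_units_def)

lemma U_count_le_Suc_card_U_units: "U_count p k h \<le> card (U_units p k h) + 1"
proof -
  have "{u \<in> {0..<int p}. \<exists>z. k + 1 \<le> z \<and> z \<le> k + h \<and> [fermat_quotient p u = z] (mod int p)}
      \<subseteq> insert 0 (U_units p k h)"
    by (auto simp: U_units_def)
  then have "U_count p k h \<le> card (insert 0 (U_units p k h))"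
    unfolding U_count_def using finite_U_units by (intro card_mono) auto
  also have "\<dots> \<le> card (U_units p k h) + 1"
    by (simp add: card_insert_if finite_U_units)
  finally show ?thesis .
qed

lemma U_units_bounds: "u \<in> U_units p k h \<Longrightarrow> 0 < u \<and> u < int p"
  by (auto simp: U_units_def)

lemma U_units_not_dvd:
  assumes "u \<in> U_units p k h"
  shows "\<not> int p dvd u"
proof
  assume "int p dvd u"
  then have "int p \<le> u"
    using U_units_bounds[OF assms] by (simp add: zdvd_imp_le)
  with U_units_bounds[OF assms] show False
    by simp
qed

lemma U_units_mult_bounds:
  assumes "u \<in> U_units p k h" and "v \<in> U_units p k h"
  shows "0 < u * v \<and> u * v < (int p)\<^sup>2"
proof -
  have "u * v < int p * int p"
    using U_units_bounds[OF assms(1)] U_units_bounds[OF assms(2)] by (intro mult_strict_mono) auto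
  then show ?thesis
    using U_units_bounds[OF assms(1)] U_units_bounds[OF assms(2)] by (simp add: power2_eq_square)
qed

text \<open>Additivity of the Fermat quotient, in the form of the defining congruence modulo \<open>p\<^sup>2\<close>.\<close>

lemma U_units_mult_power_cong:
  assumes "prime p" and "u \<in> U_units p k h" and "v \<in> U_units p k h"
  shows "\<exists>z \<in> {2 * k + 2..2 * k + 2 * h}. [(u * v) ^ (p - 1) = 1 + int p * z] (mod (int p)\<^sup>2)"
proof -
  obtain z1 where z1: "k + 1 \<le> z1" "z1 \<le> k + h" "[u ^ (p - 1) = 1 + int p * z1] (mod (int p)\<^sup>2)"
    using assms(2) fermat_quotient_cong_imp_power_cong[OF assms(1) U_units_not_dvd[OF assms(2)]]
    by (auto simp: U_units_def)
  obtain z2 where z2: "k + 1 \<le> z2" "z2 \<le> k + h" "[v ^ (p - 1) = 1 + int p * z2] (mod (int p)\<^sup>2)"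
    using assms(3) fermat_quotient_cong_imp_power_cong[OF assms(1) U_units_not_dvd[OF assms(3)]]
    by (auto simp: U_units_def)
  have "[(u * v) ^ (p - 1) = (1 + int p * z1) * (1 + int p * z2)] (mod (int p)\<^sup>2)"
    unfolding power_mult_distrib using z1(3) z2(3) by (rule cong_mult)
  also have "(1 + int p * z1) * (1 + int p * z2) = 1 + int p * (z1 + z2) + (int p)\<^sup>2 * (z1 * z2)"
    by (simp add: algebra_simps power2_eq_square)
  also have "[\<dots> = 1 + int p * (z1 + z2)] (mod (int p)\<^sup>2)"
    by (simp add: cong_iff_dvd_diff)
  finally show ?thesis
    using z1 z2 by (intro bexI[of _ "z1 + z2"]) auto
qed

lemma card_U_units_products_le:
  assumes "prime p"
  shows "card ((\<lambda>x. fst x * snd x) ` (U_units p k h \<times> U_units p k h)) \<le> nat (2 * h - 1) * p"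
proof -
  define Z where "Z = {2 * k + 2..2 * k + 2 * h}"
  define W where "W z = {w \<in> {0..<(int p)\<^sup>2}. [w ^ (p - 1) = 1 + int p * z] (mod (int p)\<^sup>2)}" for z
  have products: "(\<lambda>x. fst x * snd x) ` (U_units p k h \<times> U_units p k h) \<subseteq> (\<Union>z\<in>Z. W z)"
  proof clarify
    fix u v assume "u \<in> U_units p k h" "v \<in> U_units p k h"
    with U_units_mult_power_cong[OF assms] U_units_mult_bounds
    show "fst (u, v) * snd (u, v) \<in> (\<Union>z\<in>Z. W z)"
      unfolding Z_def W_def by fastforce
  qed
  have card_W: "card (W z) \<le> p" for z
  proof -
    have "0 < p - 1" "p - 1 < p"
      using prime_gt_1_nat[OF assms] by auto
    then have "\<not> p dvd p - 1"
      by (simp add: nat_dvd_not_less)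
    moreover have "\<not> int p dvd 1 + int p * z"
      using prime_gt_1_nat[OF assms] by (simp add: dvd_add_left_iff)
    ultimately show ?thesis
      unfolding W_def by (rule card_power_cong_prime_square_le[OF assms])
  qed
  have finite_W: "finite (W z)" for z
    unfolding W_def by (rule finite_subset[of _ "{0..<(int p)\<^sup>2}"]) auto
  have "finite (\<Union>z\<in>Z. W z)"
    using finite_W by (simp add: Z_def)
  then have "card ((\<lambda>x. fst x * snd x) ` (U_units p k h \<times> U_units p k h)) \<le> card (\<Union>z\<in>Z. W z)"
    using products by (rule card_mono)
  also have "\<dots> \<le> (\<Sum>z\<in>Z. card (W z))"
    by (rule card_UN_le) (simp add: Z_def)
  also have "\<dots> \<le> nat (2 * h - 1) * p"
    using sum_bounded_above[of Z "\<lambda>z. card (W z)" p] card_W by (simp add: Z_def)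
  finally show ?thesis .
qed

lemma card_U_units_squared_le:
  assumes "prime p" and "h \<ge> 1"
    and divisors: "\<And>n::nat. 0 < n \<Longrightarrow> n < p\<^sup>2 \<Longrightarrow> real (card {d. d dvd n}) \<le> D"
  shows "(real (card (U_units p k h)))\<^sup>2 \<le> real_of_int (2 * h - 1) * real p * D"
proof -
  define S where "S = U_units p k h"
  have "1 < p\<^sup>2"
    using prime_gt_1_nat[OF assms(1)] by (intro one_less_power) auto
  then have "D \<ge> 1"
    using divisors[of 1] by simp
  have fibres: "real (card {x \<in> S \<times> S. fst x * snd x = w}) \<le> D"
    if "w \<in> (\<lambda>x. fst x * snd x) ` (S \<times> S)" for w
  proof -
    have "0 < w" "w < (int p)\<^sup>2"
      using that U_units_mult_bounds unfolding S_def by auto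
    have "S \<times> S \<subseteq> {0<..} \<times> {0<..}"
      using U_units_bounds unfolding S_def by auto
    then have "card {x \<in> S \<times> S. fst x * snd x = w} \<le> card {d. d dvd nat w}"
      using \<open>0 < w\<close> by (rule card_factor_pairs_le_card_divisors)
    then have "real (card {x \<in> S \<times> S. fst x * snd x = w}) \<le> real (card {d. d dvd nat w})"
      by simp
    also have "\<dots> \<le> D"
      using divisors[of "nat w"] \<open>0 < w\<close> \<open>w < (int p)\<^sup>2\<close> by (simp add: nat_less_iff)
    finally show ?thesis .
  qed
  have "(real (card S))\<^sup>2 = real (card (S \<times> S))"
    by (simp add: card_cartesian_product power2_eq_square)
  also have "\<dots> \<le> real (card ((\<lambda>x. fst x * snd x) ` (S \<times> S))) * D"
    using finite_U_units fibres unfolding S_def by (intro card_le_card_image_mult) simp_all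
  also have "\<dots> \<le> real (nat (2 * h - 1) * p) * D"
    using \<open>D \<ge> 1\<close> card_U_units_products_le[OF assms(1)] unfolding S_def
    by (intro mult_right_mono of_nat_mono) simp_all
  also have "\<dots> = real_of_int (2 * h - 1) * real p * D"
    using assms(2) by simp
  finally show ?thesis
    unfolding S_def .
qed

lemma U_count_le_of_divisor_bound:
  fixes C \<delta> :: real
  assumes "prime p" and "h \<ge> 1" and "\<delta> \<ge> 0"
    and divisor_bound: "\<And>n::nat. 0 < n \<Longrightarrow> real (card {d. d dvd n}) \<le> C * real n powr \<delta>"
  shows "real (U_count p k h)
           \<le> sqrt (real_of_int h) * sqrt (real p) * (sqrt (2 * C) * real p powr \<delta> + 1)"
proof -
  define q where "q = real p"
  define s where "s = sqrt (real_of_int h) * sqrt q"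
  have "q > 0"
    using prime_gt_0_nat[OF assms(1)] by (simp add: q_def)
  have "C \<ge> 1"
    using divisor_bound[of 1] by simp
  have "s \<ge> 1"
    using assms(2) \<open>q > 0\<close> unfolding s_def q_def by (intro mult_ge1_I) auto
  have divisors: "real (card {d. d dvd n}) \<le> C * q powr (2 * \<delta>)" if "0 < n" "n < p\<^sup>2" for n
  proof -
    have "real n powr \<delta> \<le> real (p\<^sup>2) powr \<delta>"
      using that assms(3) by (intro powr_mono2) auto
    also have "\<dots> = (q powr 2) powr \<delta>"
      using \<open>q > 0\<close> by (simp add: q_def)
    also have "\<dots> = q powr (2 * \<delta>)"
      by (simp only: powr_powr)
    finally show ?thesis
      using divisor_bound[OF that(1)] \<open>C \<ge> 1\<close> by (smt (verit) mult_left_mono)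
  qed
  have "(real (card (U_units p k h)))\<^sup>2 \<le> real_of_int (2 * h - 1) * (C * q * q powr (2 * \<delta>))"
    using card_U_units_squared_le[OF assms(1,2) divisors] by (simp add: q_def mult_ac)
  also have "\<dots> \<le> real_of_int (2 * h) * (C * q * q powr (2 * \<delta>))"
    using \<open>C \<ge> 1\<close> \<open>q > 0\<close> by (intro mult_right_mono) auto
  also have "\<dots> = (s * (sqrt (2 * C) * q powr \<delta>))\<^sup>2"
  proof -
    have "(q powr \<delta>)\<^sup>2 = q powr (2 * \<delta>)"
      using \<open>q > 0\<close> by (simp add: powr_power)
    then show ?thesis
      using \<open>C \<ge> 1\<close> \<open>q > 0\<close> assms(2) unfolding s_def by (simp add: power_mult_distrib)
  qed
  finally have "real (card (U_units p k h)) \<le> s * (sqrt (2 * C) * q powr \<delta>)"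
    by (rule power2_le_imp_le) (use \<open>C \<ge> 1\<close> \<open>s \<ge> 1\<close> in simp)
  then show ?thesis
    using U_count_le_Suc_card_U_units[of p k h] \<open>s \<ge> 1\<close> unfolding s_def q_def
    by (simp add: distrib_left)
qed

theorem theorem9:
  shows "\<forall>\<epsilon>>0. \<exists>P::nat. \<forall>p::nat. \<forall>k h::int.
           prime p \<and> p \<ge> P \<and> h \<ge> 1 \<longrightarrow>
           real (U_count p k h) \<le> sqrt (real_of_int h) * real p powr (1/2 + \<epsilon>)"
proof (intro allI impI)
  fix \<epsilon> :: real assume "\<epsilon> > 0"
  then obtain C where C: "\<And>n::nat. 0 < n \<Longrightarrow> real (card {d. d dvd n}) \<le> C * real n powr (\<epsilon> / 2)"
    using card_divisors_le_powr[of "\<epsilon> / 2"] by auto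
  have "eventually (\<lambda>p. sqrt (2 * C) * real p powr (\<epsilon> / 2) + 1 \<le> real p powr \<epsilon>) sequentially"
    using \<open>\<epsilon> > 0\<close> by real_asymp
  then obtain P where P: "\<And>p. p \<ge> P \<Longrightarrow> sqrt (2 * C) * real p powr (\<epsilon> / 2) + 1 \<le> real p powr \<epsilon>"
    by (auto simp: eventually_sequentially)
  have "real (U_count p k h) \<le> sqrt (real_of_int h) * real p powr (1/2 + \<epsilon>)"
    if "prime p" "P \<le> p" "1 \<le> h" for p k h
  proof -
    have "real (U_count p k h)
        \<le> sqrt (real_of_int h) * sqrt (real p) * (sqrt (2 * C) * real p powr (\<epsilon> / 2) + 1)"
      using U_count_le_of_divisor_bound[OF \<open>prime p\<close> \<open>1 \<le> h\<close> _ C] \<open>\<epsilon> > 0\<close> by simp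
    also have "\<dots> \<le> sqrt (real_of_int h) * sqrt (real p) * real p powr \<epsilon>"
      using P[OF \<open>P \<le> p\<close>] \<open>1 \<le> h\<close> by (intro mult_left_mono) auto
    also have "\<dots> = sqrt (real_of_int h) * real p powr (1/2 + \<epsilon>)"
      by (simp add: powr_add powr_half_sqrt)
    finally show ?thesis .
  qed
  then show "\<exists>P::nat. \<forall>p::nat. \<forall>k h::int. prime p \<and> p \<ge> P \<and> h \<ge> 1 \<longrightarrow>
      real (U_count p k h) \<le> sqrt (real_of_int h) * real p powr (1/2 + \<epsilon>)"
    by blast
qed

end
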